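(* Fix an integer $L\ge 0$. The set function $F_1:2^V\to\mathbb{R}$, $F_1(S)=nL-\sum_{u\in V\setminus S}h^L_{uS}$, satisfies $F_1(\emptyset)=0$, is nondecreasing (i.e. $F_1(S)\le F_1(T)$ whenever $S\subseteq T\subseteq V$), and is submodular (i.e. for all $S\subseteq T\subseteq V$ and $j\in V\setminus T$, $F_1(S\cup\{j\})-F_1(S)\ge F_1(T\cup\{j\})-F_1(T)$).
   Context: Let $G=(V,E)$ be a finite undirected, unweighted graph with $n=|V|$ nodes in which every node $u$ has degree $d_u\ge 1$. For $u\in V$, the random walk starting at $u$ is the Markov chain $(Z_u^t)_{t\ge 0}$ with $Z_u^0=u$ and $Z_u^{t+1}$ chosen uniformly at random among the neighbors of $Z_u^t$. For $S\subseteq V$ and $u\in V$, define $T^L_{uS}=\min\{\min\{t\ge 0: Z_u^t\in S\},\,L\}$ (with $\min\emptyset=\infty$), and $h^L_{uS}=\mathbb{E}[T^L_{uS}]$. *)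

theory Defs
  imports "HOL-Probability.Probability"
begin

definition nbrs :: "('a \<Rightarrow> 'a \<Rightarrow> bool) \<Rightarrow> 'a \<Rightarrow> 'a set" where
  "nbrs E u = {v. E u v}"

definition undirected_graph :: "'a set \<Rightarrow> ('a \<Rightarrow> 'a \<Rightarrow> bool) \<Rightarrow> bool" where
  "undirected_graph V E \<longleftrightarrow> finite V \<and> (\<forall>u v. E u v \<longrightarrow> u \<in> V \<and> v \<in> V)
     \<and> (\<forall>u v. E u v \<longrightarrow> E v u)"

text \<open>Distribution of the first k steps of the simple random walk started at u:
the list [Z^0, Z^1, ..., Z^k], each next vertex uniform among the neighbours.\<close>

primrec walk :: "('a \<Rightarrow> 'a \<Rightarrow> bool) \<Rightarrow> nat \<Rightarrow> 'a \<Rightarrow> 'a list pmf" where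
  "walk E 0 u = return_pmf [u]"
| "walk E (Suc k) u =
     pmf_of_set (nbrs E u) \<bind> (\<lambda>v. map_pmf (\<lambda>p. u # p) (walk E k v))"

text \<open>Truncated hitting time T^L = min(first t with Z^t in S, L), as a function of
the trajectory Z^0 .. Z^L.\<close>

definition trunc_hit :: "nat \<Rightarrow> 'a set \<Rightarrow> 'a list \<Rightarrow> nat" where
  "trunc_hit L S p = (if \<exists>t<L. p ! t \<in> S then (LEAST t. p ! t \<in> S) else L)"

definition hit_exp :: "('a \<Rightarrow> 'a \<Rightarrow> bool) \<Rightarrow> nat \<Rightarrow> 'a \<Rightarrow> 'a set \<Rightarrow> real" where
  "hit_exp E L u S = measure_pmf.expectation (walk E L u) (\<lambda>p. real (trunc_hit L S p))"

definition F1 :: "'a set \<Rightarrow> ('a \<Rightarrow> 'a \<Rightarrow> bool) \<Rightarrow> nat \<Rightarrow> 'a set \<Rightarrow> real" where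
  "F1 V E L S = real (card V) * real L - (\<Sum>u\<in>V - S. hit_exp E L u S)"

end

theory Submission
  imports Defs
begin

text \<open>Along every trajectory the truncated hitting time is a minimum over the hitting
instants, so enlarging S can only decrease it, and the hitting time of S \<union> J is the
minimum of those of S and J. Since x \<mapsto> x - min x c is nondecreasing, the decrease
caused by adding J is larger for a larger starting time, i.e. for a smaller set S.
Both properties are preserved by taking expectations and summing over starting
vertices; vertices inside S contribute nothing since their walk starts in S.\<close>

lemma trunc_hit_eq_Min:
  "trunc_hit L S p = Min (insert L {t. t < L \<and> p ! t \<in> S})"
proof (cases "\<exists>t<L. p ! t \<in> S")
  case True
  then obtain t where t: "t < L" "p ! t \<in> S" by blast
  define m where "m = (LEAST t. p ! t \<in> S)"
  have m_in: "p ! m \<in> S" and m_le: "m \<le> t"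
    unfolding m_def using t(2) by (rule LeastI, rule Least_le)
  have m_least: "\<And>s. p ! s \<in> S \<Longrightarrow> m \<le> s"
    unfolding m_def by (rule Least_le)
  have "Min (insert L {t. t < L \<and> p ! t \<in> S}) = m"
    using m_in m_le m_least t(1) by (intro Min_eqI) auto
  then show ?thesis using True unfolding trunc_hit_def m_def by simp
next
  case False
  then have "{t. t < L \<and> p ! t \<in> S} = {}" by auto
  with False show ?thesis unfolding trunc_hit_def by (simp only:) simp
qed

lemma trunc_hit_le: "trunc_hit L S p \<le> L"
  unfolding trunc_hit_eq_Min by simp

lemma trunc_hit_empty [simp]: "trunc_hit L {} p = L"
  unfolding trunc_hit_def by simp

lemma trunc_hit_Un:
  "trunc_hit L (A \<union> B) p = min (trunc_hit L A p) (trunc_hit L B p)"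
proof -
  have "insert L {t. t < L \<and> p ! t \<in> A \<union> B} =
      insert L {t. t < L \<and> p ! t \<in> A} \<union> insert L {t. t < L \<and> p ! t \<in> B}"
    by auto
  then show ?thesis unfolding trunc_hit_eq_Min by (simp only:) (rule Min_Un; simp)
qed

lemma trunc_hit_antimono: "A \<subseteq> B \<Longrightarrow> trunc_hit L B p \<le> trunc_hit L A p"
  using trunc_hit_Un[of L A B p] by (simp add: sup.absorb2)

lemma trunc_hit_supermodular:
  assumes "S \<subseteq> T"
  shows "real (trunc_hit L T p) - real (trunc_hit L (T \<union> J) p)
       \<le> real (trunc_hit L S p) - real (trunc_hit L (S \<union> J) p)"
  using trunc_hit_antimono[OF assms, of L p]
  unfolding trunc_hit_Un by (auto simp: min_def)

lemma trunc_hit_start: "p ! 0 \<in> S \<Longrightarrow> trunc_hit L S p = 0"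
  unfolding trunc_hit_def by (auto intro: Least_eq_0)

lemma walk_start: "p \<in> set_pmf (walk E k u) \<Longrightarrow> p ! 0 = u"
  by (cases k) auto

lemma integrable_trunc_hit:
  "integrable (measure_pmf M) (\<lambda>p. real (trunc_hit L S p))"
  by (rule measure_pmf.integrable_const_bound[where B = "real L"])
     (auto simp: trunc_hit_le)

lemma hit_exp_empty [simp]: "hit_exp E L u {} = real L"
  unfolding hit_exp_def by simp

lemma hit_exp_start: "u \<in> S \<Longrightarrow> hit_exp E L u S = 0"
proof -
  assume "u \<in> S"
  then have "hit_exp E L u S = measure_pmf.expectation (walk E L u) (\<lambda>p. 0)"
    unfolding hit_exp_def
    by (intro integral_cong_AE) (auto simp: AE_measure_pmf_iff walk_start trunc_hit_start)
  then show ?thesis by simp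
qed

lemma hit_exp_diff:
  "hit_exp E L u A - hit_exp E L u B =
   measure_pmf.expectation (walk E L u) (\<lambda>p. real (trunc_hit L A p) - real (trunc_hit L B p))"
  unfolding hit_exp_def
  by (rule Bochner_Integration.integral_diff[symmetric]) (rule integrable_trunc_hit)+

lemma hit_exp_antimono: "S \<subseteq> T \<Longrightarrow> hit_exp E L u T \<le> hit_exp E L u S"
  unfolding hit_exp_def
  by (intro integral_mono integrable_trunc_hit) (simp add: trunc_hit_antimono)

lemma hit_exp_supermodular:
  "S \<subseteq> T \<Longrightarrow> hit_exp E L u T - hit_exp E L u (T \<union> J)
     \<le> hit_exp E L u S - hit_exp E L u (S \<union> J)"
  unfolding hit_exp_diff
  by (intro integral_mono Bochner_Integration.integrable_diff integrable_trunc_hit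
      trunc_hit_supermodular)

lemma F1_empty: "F1 V E L {} = 0"
  unfolding F1_def by simp

lemma F1_eq_sum:
  assumes "finite V" "S \<subseteq> V"
  shows "F1 V E L S = (\<Sum>u\<in>V. real L - hit_exp E L u S)"
proof -
  have "(\<Sum>u\<in>V. hit_exp E L u S)
      = (\<Sum>u\<in>V - S. hit_exp E L u S) + (\<Sum>u\<in>S. hit_exp E L u S)"
    using assms by (intro sum.subset_diff)
  also have "(\<Sum>u\<in>S. hit_exp E L u S) = 0"
    by (simp add: hit_exp_start)
  finally show ?thesis unfolding F1_def by (simp add: sum_subtractf)
qed

lemma F1_diff:
  assumes "finite V" "A \<subseteq> V" "B \<subseteq> V"
  shows "F1 V E L B - F1 V E L A = (\<Sum>u\<in>V. hit_exp E L u A - hit_exp E L u B)"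
  unfolding F1_eq_sum[OF assms(1,2)] F1_eq_sum[OF assms(1,3)]
  by (simp add: sum_subtractf)

theorem theorem4:
  fixes V :: "'a set" and E :: "'a \<Rightarrow> 'a \<Rightarrow> bool" and L :: nat
  assumes "undirected_graph V E"
    and "\<And>u. u \<in> V \<Longrightarrow> nbrs E u \<noteq> {}"
  shows "F1 V E L {} = 0
    \<and> (\<forall>S T. S \<subseteq> T \<and> T \<subseteq> V \<longrightarrow> F1 V E L S \<le> F1 V E L T)
    \<and> (\<forall>S T j. S \<subseteq> T \<and> T \<subseteq> V \<and> j \<in> V - T \<longrightarrow>
          F1 V E L (S \<union> {j}) - F1 V E L S \<ge> F1 V E L (T \<union> {j}) - F1 V E L T)"
proof -
  have fin: "finite V" using assms(1) unfolding undirected_graph_def by simp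
  show ?thesis
  proof (intro conjI allI impI)
    show "F1 V E L {} = 0" by (rule F1_empty)
  next
    fix S T assume ST: "S \<subseteq> T \<and> T \<subseteq> V"
    have "0 \<le> (\<Sum>u\<in>V. hit_exp E L u S - hit_exp E L u T)"
      using ST by (intro sum_nonneg) (simp add: hit_exp_antimono)
    also have "\<dots> = F1 V E L T - F1 V E L S"
      using ST by (intro F1_diff[OF fin, symmetric]) auto
    finally show "F1 V E L S \<le> F1 V E L T" by simp
  next
    fix S T j assume ST: "S \<subseteq> T \<and> T \<subseteq> V \<and> j \<in> V - T"
    have "F1 V E L (T \<union> {j}) - F1 V E L T
        = (\<Sum>u\<in>V. hit_exp E L u T - hit_exp E L u (T \<union> {j}))"
      using ST by (intro F1_diff[OF fin]) auto
    also have "\<dots> \<le> (\<Sum>u\<in>V. hit_exp E L u S - hit_exp E L u (S \<union> {j}))"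
      using ST by (intro sum_mono hit_exp_supermodular) simp
    also have "\<dots> = F1 V E L (S \<union> {j}) - F1 V E L S"
      using ST by (intro F1_diff[OF fin, symmetric]) auto
    finally show "F1 V E L (S \<union> {j}) - F1 V E L S \<ge> F1 V E L (T \<union> {j}) - F1 V E L T" .
  qed
qed

end
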